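(* On the noncommutative space $\mathbb{R}^4_\theta$ described in the context, the pair $(\nabla,\sigma)$, where $\nabla:\Omega^1_A\to\Omega^1_A\otimes_A\Omega^1_A$ is given by $\nabla(\sum_ia_i\,\mathrm{d}z^i)=\sum_i\mathrm{d}a_i\otimes_A\mathrm{d}z^i$ (i.e. $\nabla(\mathrm{d}z^i)=0$ plus the left Leibniz rule) and $\sigma:\Omega^1_A\otimes_A\Omega^1_A\to\Omega^1_A\otimes_A\Omega^1_A$ is the left $A$-linear map with $\sigma(\mathrm{d}z^i\otimes_A\mathrm{d}z^j)=R^{ji}\,\mathrm{d}z^j\otimes_A\mathrm{d}z^i$, is a bimodule connection on $\Omega^1_A$.
   Context: Let $\theta\in\mathbb{R}$ and $R=(R^{ab})$ the $4\times4$ matrix (row $a$, column $b$) with rows $(1,e^{-i\theta},1,e^{i\theta})$, $(e^{i\theta},1,e^{-i\theta},1)$, $(1,e^{i\theta},1,e^{-i\theta})$, $(e^{-i\theta},1,e^{i\theta},1)$. Let $A=\mathbb{C}\langle z^1,\dots,z^4\rangle/(z^iz^j-R^{ji}z^jz^i)$, $\Omega^1_A=\bigoplus_{i=1}^4A\,\mathrm{d}z^i$ the free left $A$-module with right action determined by $\mathrm{d}z^i\,z^j=R^{ji}z^j\,\mathrm{d}z^i$, and $\mathrm{d}:A\to\Omega^1_A$ with $z^i\mapsto\mathrm{d}z^i$ extended by the Leibniz rule. A bimodule connection on an $A$-bimodule $V$ is a pair $(\nabla,\sigma)$ of a linear map $\nabla:V\to\Omega^1_A\otimes_AV$ and an $A$-bimodule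 isomorphism $\sigma:V\otimes_A\Omega^1_A\to\Omega^1_A\otimes_AV$ with $\nabla(av)=a\nabla(v)+\mathrm{d}a\otimes_Av$ and $\nabla(va)=\nabla(v)a+\sigma(v\otimes_A\mathrm{d}a)$ for all $a\in A$, $v\in V$. *)

theory Defs
  imports Complex_Main "HOL-Library.Poly_Mapping" "HOL-Library.Numeral_Type"
    "HOL-Library.Function_Algebras"
begin

text \<open>Indices 1..4 of the paper are represented by the elements 0,1,2,3 of the
  finite numeral type 4.  The matrix R (row a, column b).\<close>

definition idx4 :: "4 \<Rightarrow> nat" where
  "idx4 a = nat (Rep_bit0 a)"

definition Rmat :: "real \<Rightarrow> 4 \<Rightarrow> 4 \<Rightarrow> complex" where
  "Rmat \<theta> a b =
     (let p = cis \<theta>; m = cis (- \<theta>) in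
      [[1, m, 1, p],
       [p, 1, m, 1],
       [1, p, 1, m],
       [m, 1, p, 1]] ! idx4 a ! idx4 b)"

text \<open>The algebra A = C<z1..z4>/(z^i z^j - R^{ji} z^j z^i), realised on its basis of
  ordered monomials z1^{n1} z2^{n2} z3^{n3} z4^{n4} (exponent vectors 4 => nat).  The product of ordered
  monomials is obtained by reordering with the defining relations
  (z^j z^i = R^{ij} z^i z^j for i < j).\<close>

type_synonym mono = "4 \<Rightarrow> nat"
type_synonym alg = "mono \<Rightarrow>\<^sub>0 complex"

definition phase :: "real \<Rightarrow> mono \<Rightarrow> mono \<Rightarrow> complex" where
  "phase \<theta> m n = (\<Prod>i\<in>UNIV. \<Prod>j\<in>{j. i < j}. Rmat \<theta> i j ^ (m j * n i))"

definition amul :: "real \<Rightarrow> alg \<Rightarrow> alg \<Rightarrow> alg" where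
  "amul \<theta> p q = (\<Sum>m\<in>Poly_Mapping.keys p. \<Sum>n\<in>Poly_Mapping.keys q.
      Poly_Mapping.single (\<lambda>k. m k + n k) (Poly_Mapping.lookup p m * Poly_Mapping.lookup q n * phase \<theta> m n))"

definition asc :: "complex \<Rightarrow> alg \<Rightarrow> alg" where
  "asc c p = Poly_Mapping.map (\<lambda>x. c * x) p"

definition aone :: alg where
  "aone = Poly_Mapping.single (\<lambda>_. 0) 1"

definition zgen :: "4 \<Rightarrow> alg" where
  "zgen i = Poly_Mapping.single (\<lambda>k. if k = i then 1 else 0) 1"

text \<open>Omega^1: free left A-module with basis dz^i; an element sum_i a_i dz^i is the
  coefficient function i => a_i.\<close>

type_synonym om1 = "4 \<Rightarrow> alg"

definition dz :: "4 \<Rightarrow> om1" where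
  "dz i = (\<lambda>k. if k = i then aone else 0)"

definition lact1 :: "real \<Rightarrow> alg \<Rightarrow> om1 \<Rightarrow> om1" where
  "lact1 \<theta> a w = (\<lambda>i. amul \<theta> a (w i))"

text \<open>Right action determined by dz^i z^j = R^{ji} z^j dz^i: moving dz^i past an
  ordered monomial z^n multiplies by prod_j (R^{ji})^{n_j}.\<close>

definition twist :: "real \<Rightarrow> 4 \<Rightarrow> alg \<Rightarrow> alg" where
  "twist \<theta> i b = (\<Sum>n\<in>Poly_Mapping.keys b.
      Poly_Mapping.single n (Poly_Mapping.lookup b n * (\<Prod>j\<in>UNIV. Rmat \<theta> j i ^ n j)))"

definition ract1 :: "real \<Rightarrow> om1 \<Rightarrow> alg \<Rightarrow> om1" where
  "ract1 \<theta> w b = (\<lambda>i. amul \<theta> (w i) (twist \<theta> i b))"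

definition dA :: "real \<Rightarrow> alg \<Rightarrow> om1" where
  "dA \<theta> = (THE d. (\<forall>i. d (zgen i) = dz i)
       \<and> (\<forall>a b. d (amul \<theta> a b) = ract1 \<theta> (d a) b + lact1 \<theta> a (d b))
       \<and> (\<forall>a b. d (a + b) = d a + d b)
       \<and> (\<forall>c a. d (asc c a) = (\<lambda>i. asc c (d a i))))"

text \<open>Omega^1 (x)_A Omega^1: since Omega^1 is free as a left A-module on dz^j,
  it is the free left A-module on dz^i (x) dz^j; an element is (i,j) => coefficient.\<close>

type_synonym om2 = "4 \<Rightarrow> 4 \<Rightarrow> alg"

text \<open>Elementary tensor: w (x) (sum_j b_j dz^j) = sum_j (w b_j) (x) dz^j.\<close>

definition tens :: "real \<Rightarrow> om1 \<Rightarrow> om1 \<Rightarrow> om2" where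
  "tens \<theta> w v = (\<lambda>i j. ract1 \<theta> w (v j) i)"

definition lact2 :: "real \<Rightarrow> alg \<Rightarrow> om2 \<Rightarrow> om2" where
  "lact2 \<theta> a X = (\<lambda>i j. amul \<theta> a (X i j))"

definition ract2 :: "real \<Rightarrow> om2 \<Rightarrow> alg \<Rightarrow> om2" where
  "ract2 \<theta> X b = (\<lambda>p q. \<Sum>i\<in>UNIV. \<Sum>j\<in>UNIV.
      tens \<theta> (lact1 \<theta> (X i j) (dz i)) (ract1 \<theta> (dz j) b) p q)"

definition asc2 :: "complex \<Rightarrow> om2 \<Rightarrow> om2" where
  "asc2 c X = (\<lambda>i j. asc c (X i j))"

definition asc1 :: "complex \<Rightarrow> om1 \<Rightarrow> om1" where
  "asc1 c w = (\<lambda>i. asc c (w i))"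

text \<open>Bimodule connection on V = Omega^1 (so V (x)_A Omega^1 = Omega^1 (x)_A V = om2).\<close>

definition bimodule_connection :: "real \<Rightarrow> (om1 \<Rightarrow> om2) \<Rightarrow> (om2 \<Rightarrow> om2) \<Rightarrow> bool" where
  "bimodule_connection \<theta> nabla sigma \<longleftrightarrow>
     (\<forall>v w. nabla (v + w) = nabla v + nabla w)
   \<and> (\<forall>c v. nabla (asc1 c v) = asc2 c (nabla v))
   \<and> (\<forall>X Y. sigma (X + Y) = sigma X + sigma Y)
   \<and> (\<forall>a X. sigma (lact2 \<theta> a X) = lact2 \<theta> a (sigma X))
   \<and> (\<forall>a X. sigma (ract2 \<theta> X a) = ract2 \<theta> (sigma X) a)
   \<and> bij sigma
   \<and> (\<forall>a v. nabla (lact1 \<theta> a v) = lact2 \<theta> a (nabla v) + tens \<theta> (dA \<theta> a) v)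
   \<and> (\<forall>a v. nabla (ract1 \<theta> v a) = ract2 \<theta> (nabla v) a + sigma (tens \<theta> v (dA \<theta> a)))"

definition nablaR :: "real \<Rightarrow> om1 \<Rightarrow> om2" where
  "nablaR \<theta> w = (\<lambda>p q. \<Sum>i\<in>UNIV. tens \<theta> (dA \<theta> (w i)) (dz i) p q)"

text \<open>sigma: left A-linear with sigma(dz^i (x) dz^j) = R^{ji} dz^j (x) dz^i,
  i.e. the coefficient of dz^p (x) dz^q in sigma(X) is R^{pq} X_{qp}.\<close>

definition sigmaR :: "real \<Rightarrow> om2 \<Rightarrow> om2" where
  "sigmaR \<theta> X = (\<lambda>p q. \<Sum>i\<in>UNIV. \<Sum>j\<in>UNIV.
      lact2 \<theta> (X i j) (asc2 (Rmat \<theta> j i) (tens \<theta> (dz j) (dz i))) p q)"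

end

theory Submission
  imports Defs
begin

text \<open>
  All structure constants of the algebra are phases: R^{ij} = cis (\<theta> s_ij) with s = Rarg an
  antisymmetric sign matrix, so on ordered monomials z^m z^n = cis (\<theta> E(m,n)) z^{m+n} with
  E = phase_arg bilinear, and moving dz^i to the right of z^n costs the phase cis (\<theta> T_i(n))
  with T_i = twist_arg i linear.  The differential is therefore an explicit twisted partial
  derivative, and it is the only map with the defining properties because the z^i generate.
  In coordinates the two Leibniz rules of the connection reduce to the Leibniz rule of this
  derivative and to the commutation rule \<partial>_p (twist_q b) = R^{pq} twist_q (\<partial>_p b), whose
  factor R^{pq} is exactly the coefficient supplied by \<sigma>.  Finally \<sigma> is an involution
  because R^{pq} R^{qp} = 1.
\<close>

section \<open>Finitely supported functions\<close>

lemma poly_mapping_sum_single: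
  "(a :: 'a \<Rightarrow>\<^sub>0 'b::comm_monoid_add)
     = (\<Sum>n\<in>Poly_Mapping.keys a. Poly_Mapping.single n (Poly_Mapping.lookup a n))"
  by (rule poly_mapping_eqI) (simp add: lookup_sum lookup_single when_def in_keys_iff)

lemma poly_mapping_induct [case_names zero single add]:
  assumes "P 0" "\<And>k c. P (Poly_Mapping.single k c)" "\<And>a b. P a \<Longrightarrow> P b \<Longrightarrow> P (a + b)"
  shows "P (a :: 'a \<Rightarrow>\<^sub>0 'b::comm_monoid_add)"
proof -
  have "P (\<Sum>n\<in>S. Poly_Mapping.single n (Poly_Mapping.lookup a n))" if "finite S" for S
    using that by (induction S rule: finite_induct) (auto intro: assms)
  then show ?thesis
    by (subst poly_mapping_sum_single) simp
qed

lemma sum_keys_single: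
  assumes "f k 0 = 0"
  shows "(\<Sum>n\<in>Poly_Mapping.keys (Poly_Mapping.single k c).
            f n (Poly_Mapping.lookup (Poly_Mapping.single k c) n)) = f k c"
  using assms by auto

lemma sum_keys_add:
  fixes f :: "'a \<Rightarrow> 'b::comm_monoid_add \<Rightarrow> 'c::cancel_comm_monoid_add"
  assumes f_add: "\<And>n x y. f n (x + y) = f n x + f n y"
  shows "(\<Sum>n\<in>Poly_Mapping.keys (a + b). f n (Poly_Mapping.lookup (a + b) n))
     = (\<Sum>n\<in>Poly_Mapping.keys a. f n (Poly_Mapping.lookup a n))
       + (\<Sum>n\<in>Poly_Mapping.keys b. f n (Poly_Mapping.lookup b n))"
proof -
  let ?S = "Poly_Mapping.keys a \<union> Poly_Mapping.keys b"
  have f_zero: "f n 0 = 0" for n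
    using f_add[of n 0 0] by simp
  have extend: "(\<Sum>n\<in>Poly_Mapping.keys c. f n (Poly_Mapping.lookup c n))
      = (\<Sum>n\<in>?S. f n (Poly_Mapping.lookup c n))" if "Poly_Mapping.keys c \<subseteq> ?S" for c
    by (rule sum.mono_neutral_left) (use that f_zero in \<open>auto simp: in_keys_iff\<close>)
  show ?thesis
    by (subst (1 2 3) extend) (auto simp: keys_add lookup_add f_add sum.distrib)
qed

section \<open>The sign matrix and the phases\<close>

lemma exhaust_4: "(x::4) = 0 \<or> x = 1 \<or> x = 2 \<or> x = 3"
proof (cases x)
  case (of_int z)
  then have "z = 0 \<or> z = 1 \<or> z = 2 \<or> z = 3" by auto
  then show ?thesis using of_int by auto
qed

lemma UNIV_4: "(UNIV :: 4 set) = {0, 1, 2, 3}"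
  using exhaust_4 by auto

lemma idx4_simps [simp]: "idx4 0 = 0" "idx4 1 = 1" "idx4 2 = 2" "idx4 3 = 3"
  by (simp_all add: idx4_def bit0.Rep_0 bit0.Rep_1 bit0.Rep_numeral)

lemma less_4_simps [simp]:
  "(0::4) < 1" "(0::4) < 2" "(0::4) < 3" "(1::4) < 2" "(1::4) < 3" "(2::4) < 3"
  "\<not> (1::4) < 0" "\<not> (2::4) < 0" "\<not> (3::4) < 0" "\<not> (2::4) < 1" "\<not> (3::4) < 1" "\<not> (3::4) < 2"
  by (simp_all add: less_bit0_def bit0.Rep_0 bit0.Rep_1 bit0.Rep_numeral)

lemma neq_4_simps [simp]:
  "(0::4) \<noteq> 1" "(0::4) \<noteq> 2" "(0::4) \<noteq> 3" "(1::4) \<noteq> 2" "(1::4) \<noteq> 3" "(2::4) \<noteq> 3"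
  "(1::4) \<noteq> 0" "(2::4) \<noteq> 0" "(3::4) \<noteq> 0" "(2::4) \<noteq> 1" "(3::4) \<noteq> 1" "(3::4) \<noteq> 2"
  using less_4_simps by (metis order_less_irrefl)+

lemma sum_UNIV_4: "(\<Sum>i\<in>UNIV. f (i::4)) = f 0 + f 1 + f 2 + f 3"
  by (simp only: UNIV_4 sum.insert finite.intros insert_iff empty_iff neq_4_simps simp_thms
      sum.empty add.assoc add_0_right)

definition Rarg :: "4 \<Rightarrow> 4 \<Rightarrow> real" where
  "Rarg a b = [[0, -1, 0, 1], [1, 0, -1, 0], [0, 1, 0, -1], [-1, 0, 1, 0]] ! idx4 a ! idx4 b"

lemma Rarg_simps [simp]:
  "Rarg 0 0 = 0" "Rarg 0 1 = -1" "Rarg 0 2 = 0" "Rarg 0 3 = 1"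
  "Rarg 1 0 = 1" "Rarg 1 1 = 0" "Rarg 1 2 = -1" "Rarg 1 3 = 0"
  "Rarg 2 0 = 0" "Rarg 2 1 = 1" "Rarg 2 2 = 0" "Rarg 2 3 = -1"
  "Rarg 3 0 = -1" "Rarg 3 1 = 0" "Rarg 3 2 = 1" "Rarg 3 3 = 0"
  by (simp_all add: Rarg_def)

lemma Rarg_antisym: "Rarg a b = - Rarg b a"
  using exhaust_4[of a] exhaust_4[of b] by auto

lemma Rmat_eq_cis: "Rmat \<theta> a b = cis (\<theta> * Rarg a b)"
  using exhaust_4[of a] exhaust_4[of b] by (auto simp: Rmat_def Let_def)

lemma Rmat_mult_Rmat_swap: "Rmat \<theta> a b * Rmat \<theta> b a = 1"
  by (simp add: Rmat_eq_cis cis_mult Rarg_antisym[of b a])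

lemma prod_cis: "finite A \<Longrightarrow> (\<Prod>i\<in>A. cis (f i)) = cis (\<Sum>i\<in>A. f i)"
  by (induction A rule: finite_induct) (auto simp: cis_mult)

definition phase_arg :: "mono \<Rightarrow> mono \<Rightarrow> real" where
  "phase_arg m n = (\<Sum>i\<in>UNIV. \<Sum>j\<in>{j. i < j}. Rarg i j * real (m j * n i))"

definition twist_arg :: "4 \<Rightarrow> mono \<Rightarrow> real" where
  "twist_arg i n = (\<Sum>j\<in>UNIV. Rarg j i * real (n j))"

definition tderiv_arg :: "4 \<Rightarrow> mono \<Rightarrow> real" where
  "tderiv_arg k n = (\<Sum>j\<in>{j. k < j}. Rarg j k * real (n j))"

lemma phase_eq_cis: "phase \<theta> m n = cis (\<theta> * phase_arg m n)"
  by (simp add: phase_def phase_arg_def Rmat_eq_cis DeMoivre prod_cis sum_distrib_left algebra_simps)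

lemma twist_factor_eq_cis: "(\<Prod>j\<in>UNIV. Rmat \<theta> j i ^ n j) = cis (\<theta> * twist_arg i n)"
  by (simp add: twist_arg_def Rmat_eq_cis DeMoivre prod_cis sum_distrib_left algebra_simps)

lemma sum_Collect_eq_sum_UNIV_if:
  "(\<Sum>j\<in>{j. P j}. g j) = (\<Sum>j\<in>(UNIV :: 'a::finite set). if P j then g j else 0)"
  by (simp add: sum.If_cases)

lemma phase_arg_shift_left:
  "phase_arg (\<lambda>j. m j + (if j = k then 1 else 0)) n + tderiv_arg k n = twist_arg k n + phase_arg m n"
  using exhaust_4[of k]
  by (auto simp: phase_arg_def twist_arg_def tderiv_arg_def sum_Collect_eq_sum_UNIV_if sum_UNIV_4 algebra_simps)

lemma phase_arg_shift_right:
  "phase_arg m (\<lambda>j. n j + (if j = k then 1 else 0)) + tderiv_arg k m = phase_arg m n"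
  using exhaust_4[of k]
  by (auto simp: phase_arg_def tderiv_arg_def sum_Collect_eq_sum_UNIV_if sum_UNIV_4 algebra_simps)

lemma twist_arg_shift: "twist_arg q (\<lambda>j. n j + (if j = p then 1 else 0)) = Rarg p q + twist_arg q n"
  using exhaust_4[of p] by (auto simp: twist_arg_def sum_UNIV_4 algebra_simps)

lemma tderiv_arg_add: "tderiv_arg k (\<lambda>j. m j + n j) = tderiv_arg k m + tderiv_arg k n"
  by (simp add: tderiv_arg_def sum.distrib algebra_simps)

section \<open>The algebra\<close>

lemma amul_single:
  "amul \<theta> (Poly_Mapping.single m c) (Poly_Mapping.single n d)
     = Poly_Mapping.single (\<lambda>k. m k + n k) (c * d * phase \<theta> m n)"
  by (cases "c = 0"; cases "d = 0") (simp_all add: amul_def)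

lemma amul_zero_left [simp]: "amul \<theta> 0 q = 0"
  by (simp add: amul_def)

lemma amul_zero_right [simp]: "amul \<theta> p 0 = 0"
  by (simp add: amul_def)

lemma amul_add_left: "amul \<theta> (p + p') q = amul \<theta> p q + amul \<theta> p' q"
  unfolding amul_def
  by (rule sum_keys_add) (simp add: distrib_right single_add sum.distrib)

lemma amul_add_right: "amul \<theta> p (q + q') = amul \<theta> p q + amul \<theta> p q'"
proof -
  have swap: "amul \<theta> p r = (\<Sum>n\<in>Poly_Mapping.keys r. \<Sum>m\<in>Poly_Mapping.keys p.
      Poly_Mapping.single (\<lambda>k. m k + n k)
        (Poly_Mapping.lookup p m * Poly_Mapping.lookup r n * phase \<theta> m n))" for r
    unfolding amul_def by (rule sum.swap)
  show ?thesis
    unfolding swap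
    by (rule sum_keys_add) (simp add: distrib_left distrib_right single_add sum.distrib)
qed

lemma lookup_asc [simp]: "Poly_Mapping.lookup (asc c p) k = c * Poly_Mapping.lookup p k"
  by (simp add: asc_def Poly_Mapping.map.rep_eq when_def)

lemma asc_single [simp]: "asc c (Poly_Mapping.single n d) = Poly_Mapping.single n (c * d)"
  by (simp add: asc_def)

lemma asc_add: "asc c (p + q) = asc c p + asc c q"
  by (rule poly_mapping_eqI) (simp add: lookup_add algebra_simps)

lemma asc_zero [simp]: "asc c 0 = 0"
  by (rule poly_mapping_eqI) simp

lemma asc_asc: "asc c (asc d p) = asc (c * d) p"
  by (rule poly_mapping_eqI) simp

lemma asc_one [simp]: "asc 1 p = p"
  by (rule poly_mapping_eqI) simp

lemma asc_inject: "c \<noteq> 0 \<Longrightarrow> asc c p = asc c q \<longleftrightarrow> p = q"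
  by (metis asc_asc asc_one field_class.field_inverse)

lemma amul_aone_left [simp]: "amul \<theta> aone p = p"
  by (induction p rule: poly_mapping_induct)
    (auto simp: aone_def amul_single phase_eq_cis phase_arg_def amul_add_right)

lemma amul_aone_right [simp]: "amul \<theta> p aone = p"
  by (induction p rule: poly_mapping_induct)
    (auto simp: aone_def amul_single phase_eq_cis phase_arg_def amul_add_left)

lemma amul_asc_left: "amul \<theta> (asc c p) q = asc c (amul \<theta> p q)"
proof (induction p rule: poly_mapping_induct)
  case (single m d)
  show ?case
    by (induction q rule: poly_mapping_induct)
      (auto simp: amul_single amul_add_right asc_add algebra_simps)
qed (auto simp: amul_add_left asc_add)

lemma amul_asc_right: "amul \<theta> p (asc c q) = asc c (amul \<theta> p q)"
proof (induction p rule: poly_mapping_induct)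
  case (single m d)
  show ?case
    by (induction q rule: poly_mapping_induct)
      (auto simp: amul_single amul_add_right asc_add algebra_simps)
qed (auto simp: amul_add_left asc_add)

lemma twist_single:
  "twist \<theta> i (Poly_Mapping.single n c) = Poly_Mapping.single n (c * cis (\<theta> * twist_arg i n))"
  unfolding twist_def twist_factor_eq_cis by (rule sum_keys_single) simp

lemma twist_add: "twist \<theta> i (p + q) = twist \<theta> i p + twist \<theta> i q"
  unfolding twist_def by (rule sum_keys_add) (simp add: distrib_right single_add)

lemma twist_zero [simp]: "twist \<theta> i 0 = 0"
  by (simp add: twist_def)

lemma twist_aone [simp]: "twist \<theta> i aone = aone"
  by (simp add: aone_def twist_single twist_arg_def)

lemma twist_commute: "twist \<theta> p (twist \<theta> q b) = twist \<theta> q (twist \<theta> p b)"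
  by (induction b rule: poly_mapping_induct) (auto simp: twist_single twist_add algebra_simps)

section \<open>The twisted partial derivatives\<close>

definition dec_mono :: "4 \<Rightarrow> mono \<Rightarrow> mono" where
  "dec_mono k n = (\<lambda>j. n j - (if j = k then 1 else 0))"

lemma dec_mono_inc [simp]: "0 < n k \<Longrightarrow> (\<lambda>j. dec_mono k n j + (if j = k then 1 else 0)) = n"
  by (auto simp: dec_mono_def fun_eq_iff)

text \<open>
  The coefficient of dz^k in d z^n: each of the n_k factors z^k contributes the same phase,
  produced by moving dz^k to the right past the factors z^j with j > k.  Where n_k = 0 the
  truncated exponent dec_mono k n is junk, but it carries the coefficient 0.
\<close>

definition tderiv :: "real \<Rightarrow> alg \<Rightarrow> om1" where
  "tderiv \<theta> a = (\<lambda>k. \<Sum>n\<in>Poly_Mapping.keys a. Poly_Mapping.single (dec_mono k n)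
      (Poly_Mapping.lookup a n * of_nat (n k) * cis (\<theta> * tderiv_arg k n)))"

lemma tderiv_single:
  "tderiv \<theta> (Poly_Mapping.single n c) k
     = Poly_Mapping.single (dec_mono k n) (c * of_nat (n k) * cis (\<theta> * tderiv_arg k n))"
  unfolding tderiv_def by (rule sum_keys_single) simp

lemma tderiv_add: "tderiv \<theta> (a + b) = tderiv \<theta> a + tderiv \<theta> b"
  unfolding tderiv_def plus_fun_def
  by (rule ext, rule sum_keys_add) (simp add: algebra_simps single_add)

lemma tderiv_zero [simp]: "tderiv \<theta> 0 = 0"
  by (simp add: tderiv_def fun_eq_iff)

lemma tderiv_asc: "tderiv \<theta> (asc c a) = (\<lambda>k. asc c (tderiv \<theta> a k))"
  by (induction a rule: poly_mapping_induct)
    (auto simp: tderiv_single tderiv_add asc_add algebra_simps fun_eq_iff)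

lemma tderiv_arg_unit [simp]: "tderiv_arg k (\<lambda>j. if j = k then 1 else 0) = 0"
  by (auto simp: tderiv_arg_def intro!: sum.neutral)

lemma tderiv_zgen: "tderiv \<theta> (zgen i) = dz i"
  by (auto simp: fun_eq_iff zgen_def dz_def tderiv_single dec_mono_def aone_def)

lemma tderiv_amul_single_left_term:
  "Poly_Mapping.single (dec_mono k (\<lambda>j. m j + n j))
     (c * d * phase \<theta> m n * of_nat (m k) * cis (\<theta> * tderiv_arg k (\<lambda>j. m j + n j)))
   = amul \<theta> (tderiv \<theta> (Poly_Mapping.single m c) k) (twist \<theta> k (Poly_Mapping.single n d))"
proof (cases "m k = 0")
  case True
  then show ?thesis by (simp add: tderiv_single)
next
  case False
  let ?m' = "dec_mono k m"
  have "phase_arg m n + tderiv_arg k (\<lambda>j. m j + n j)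
      = tderiv_arg k m + twist_arg k n + phase_arg ?m' n"
    using phase_arg_shift_left[of ?m' k n] False by (simp add: tderiv_arg_add)
  then have "phase \<theta> m n * cis (\<theta> * tderiv_arg k (\<lambda>j. m j + n j))
      = cis (\<theta> * tderiv_arg k m) * cis (\<theta> * twist_arg k n) * phase \<theta> ?m' n"
    by (simp add: phase_eq_cis cis_mult flip: distrib_left)
  moreover have "dec_mono k (\<lambda>j. m j + n j) = (\<lambda>j. ?m' j + n j)"
    using False by (auto simp: dec_mono_def fun_eq_iff)
  ultimately show ?thesis
    by (simp add: tderiv_single twist_single amul_single algebra_simps)
qed

lemma tderiv_amul_single_right_term:
  "Poly_Mapping.single (dec_mono k (\<lambda>j. m j + n j))
     (c * d * phase \<theta> m n * of_nat (n k) * cis (\<theta> * tderiv_arg k (\<lambda>j. m j + n j)))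
   = amul \<theta> (Poly_Mapping.single m c) (tderiv \<theta> (Poly_Mapping.single n d) k)"
proof (cases "n k = 0")
  case True
  then show ?thesis by (simp add: tderiv_single)
next
  case False
  let ?n' = "dec_mono k n"
  have "phase_arg m n + tderiv_arg k (\<lambda>j. m j + n j) = tderiv_arg k n + phase_arg m ?n'"
    using phase_arg_shift_right[of m ?n' k] False by (simp add: tderiv_arg_add)
  then have "phase \<theta> m n * cis (\<theta> * tderiv_arg k (\<lambda>j. m j + n j))
      = cis (\<theta> * tderiv_arg k n) * phase \<theta> m ?n'"
    by (simp add: phase_eq_cis cis_mult flip: distrib_left)
  moreover have "dec_mono k (\<lambda>j. m j + n j) = (\<lambda>j. m j + ?n' j)"
    using False by (auto simp: dec_mono_def fun_eq_iff)
  ultimately show ?thesis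
    by (simp add: tderiv_single amul_single algebra_simps)
qed

lemma tderiv_amul_single:
  "tderiv \<theta> (amul \<theta> (Poly_Mapping.single m c) (Poly_Mapping.single n d)) k
     = amul \<theta> (tderiv \<theta> (Poly_Mapping.single m c) k) (twist \<theta> k (Poly_Mapping.single n d))
       + amul \<theta> (Poly_Mapping.single m c) (tderiv \<theta> (Poly_Mapping.single n d) k)"
proof -
  let ?mn = "\<lambda>j. m j + n j"
  have "tderiv \<theta> (amul \<theta> (Poly_Mapping.single m c) (Poly_Mapping.single n d)) k
      = Poly_Mapping.single (dec_mono k ?mn)
          (c * d * phase \<theta> m n * of_nat (m k) * cis (\<theta> * tderiv_arg k ?mn))
        + Poly_Mapping.single (dec_mono k ?mn)
          (c * d * phase \<theta> m n * of_nat (n k) * cis (\<theta> * tderiv_arg k ?mn))"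
    by (simp add: amul_single tderiv_single algebra_simps flip: single_add)
  then show ?thesis
    by (simp only: tderiv_amul_single_left_term tderiv_amul_single_right_term)
qed

lemma tderiv_amul:
  "tderiv \<theta> (amul \<theta> a b) k = amul \<theta> (tderiv \<theta> a k) (twist \<theta> k b) + amul \<theta> a (tderiv \<theta> b k)"
proof (induction a rule: poly_mapping_induct)
  case (single m c)
  show ?case
    by (induction b rule: poly_mapping_induct)
      (auto simp: tderiv_amul_single amul_add_right tderiv_add twist_add)
qed (auto simp: amul_add_left tderiv_add)

lemma tderiv_twist: "tderiv \<theta> (twist \<theta> q a) p = asc (Rmat \<theta> p q) (twist \<theta> q (tderiv \<theta> a p))"
proof (induction a rule: poly_mapping_induct)
  case (single n c)
  show ?case
  proof (cases "n p = 0")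
    case True
    then show ?thesis by (simp add: tderiv_single twist_single)
  next
    case False
    have "twist_arg q n = Rarg p q + twist_arg q (dec_mono p n)"
      using twist_arg_shift[of q "dec_mono p n" p] False by simp
    then have "cis (\<theta> * twist_arg q n) = Rmat \<theta> p q * cis (\<theta> * twist_arg q (dec_mono p n))"
      by (simp add: Rmat_eq_cis cis_mult algebra_simps)
    then show ?thesis
      by (simp add: tderiv_single twist_single algebra_simps)
  qed
qed (auto simp: twist_add tderiv_add asc_add)

section \<open>The differential\<close>

definition is_differential :: "real \<Rightarrow> (alg \<Rightarrow> om1) \<Rightarrow> bool" where
  "is_differential \<theta> d \<longleftrightarrow> (\<forall>i. d (zgen i) = dz i)
       \<and> (\<forall>a b. d (amul \<theta> a b) = ract1 \<theta> (d a) b + lact1 \<theta> a (d b))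
       \<and> (\<forall>a b. d (a + b) = d a + d b)
       \<and> (\<forall>c a. d (asc c a) = (\<lambda>i. asc c (d a i)))"

lemma is_differential_tderiv: "is_differential \<theta> (tderiv \<theta>)"
  by (auto simp: is_differential_def tderiv_zgen tderiv_add tderiv_asc tderiv_amul
      fun_eq_iff ract1_def lact1_def)

lemma is_differential_zero: "is_differential \<theta> d \<Longrightarrow> d 0 = 0"
  unfolding is_differential_def by (metis add_0 add_cancel_right_right)

lemma is_differential_aone: "is_differential \<theta> d \<Longrightarrow> d aone = 0"
proof -
  assume "is_differential \<theta> d"
  then have "d (amul \<theta> aone aone) = ract1 \<theta> (d aone) aone + lact1 \<theta> aone (d aone)"
    unfolding is_differential_def by blast
  then show ?thesis
    by (simp add: ract1_def lact1_def)
qed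

lemma zgen_amul_dec_mono:
  assumes "0 < m k"
  shows "amul \<theta> (zgen k) (Poly_Mapping.single (dec_mono k m) 1)
    = asc (phase \<theta> (\<lambda>j. if j = k then 1 else 0) (dec_mono k m)) (Poly_Mapping.single m 1)"
proof -
  have "(\<lambda>j. (if j = k then 1 else 0) + dec_mono k m j) = m"
    using dec_mono_inc[of m k, OF assms] by (simp add: fun_eq_iff add.commute)
  then show ?thesis by (simp add: zgen_def amul_single)
qed

text \<open>Induction on the degree: z^m is a nonzero multiple of z^k z^{m - e_k}.\<close>

lemma is_differential_unique_single:
  assumes d: "is_differential \<theta> d" and d': "is_differential \<theta> d'"
  shows "d (Poly_Mapping.single m 1) = d' (Poly_Mapping.single m 1)"
proof (induction "sum m UNIV" arbitrary: m)
  case 0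
  then have "m = (\<lambda>_. 0)"
    by (simp add: fun_eq_iff)
  then have "Poly_Mapping.single m 1 = aone"
    by (simp add: aone_def)
  then show ?case
    using is_differential_aone[OF d] is_differential_aone[OF d'] by simp
next
  case (Suc N)
  then obtain k where pos: "0 < m k"
    by (metis sum.neutral neq0_conv nat.distinct(1))
  let ?m' = "dec_mono k m" and ?c = "phase \<theta> (\<lambda>j. if j = k then 1 else 0) (dec_mono k m)"
  have "sum m UNIV = sum ?m' UNIV + 1"
    by (subst (1) dec_mono_inc[of m k, OF pos, symmetric]) (simp add: sum.distrib)
  then have "d (Poly_Mapping.single ?m' 1) = d' (Poly_Mapping.single ?m' 1)"
    using Suc by simp
  then have "d (amul \<theta> (zgen k) (Poly_Mapping.single ?m' 1))
      = d' (amul \<theta> (zgen k) (Poly_Mapping.single ?m' 1))"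
    using d d' by (simp add: is_differential_def)
  then have "d (asc ?c (Poly_Mapping.single m 1)) = d' (asc ?c (Poly_Mapping.single m 1))"
    by (simp only: zgen_amul_dec_mono[of m k, OF pos])
  then show ?case
    using d d' by (simp add: is_differential_def fun_eq_iff phase_eq_cis asc_inject del: asc_single)
qed

lemma is_differential_unique:
  assumes d: "is_differential \<theta> d" and d': "is_differential \<theta> d'"
  shows "d = d'"
proof
  fix a
  show "d a = d' a"
  proof (induction a rule: poly_mapping_induct)
    case zero
    then show ?case using is_differential_zero[OF d] is_differential_zero[OF d'] by simp
  next
    case (single k c)
    have "d (asc c (Poly_Mapping.single k 1)) = d' (asc c (Poly_Mapping.single k 1))"
      using d d' is_differential_unique_single[OF d d']
      by (simp add: is_differential_def del: asc_single)
    then show ?case by simp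
  next
    case (add a b)
    then show ?case using d d' by (simp add: is_differential_def)
  qed
qed

lemma dA_eq_tderiv: "dA \<theta> = tderiv \<theta>"
proof -
  have "dA \<theta> = (THE d. is_differential \<theta> d)"
    by (simp add: dA_def is_differential_def)
  also have "\<dots> = tderiv \<theta>"
    using is_differential_tderiv is_differential_unique by blast
  finally show ?thesis .
qed

section \<open>The connection in coordinates\<close>

lemma tens_apply: "tens \<theta> w v p q = amul \<theta> (w p) (twist \<theta> p (v q))"
  by (simp add: tens_def ract1_def)

lemma nablaR_apply: "nablaR \<theta> w p q = tderiv \<theta> (w q) p"
proof -
  have "nablaR \<theta> w p q = (\<Sum>i\<in>UNIV. if q = i then tderiv \<theta> (w i) p else 0)"
    unfolding nablaR_def dA_eq_tderiv by (rule sum.cong) (auto simp: tens_apply dz_def)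
  then show ?thesis by simp
qed

lemma lact1_dz: "lact1 \<theta> a (dz i) = (\<lambda>k. if k = i then a else 0)"
  by (simp add: lact1_def dz_def fun_eq_iff)

lemma ract1_dz: "ract1 \<theta> (dz i) b = (\<lambda>k. if k = i then twist \<theta> i b else 0)"
  by (simp add: ract1_def dz_def fun_eq_iff)

lemma sigmaR_apply: "sigmaR \<theta> X p q = asc (Rmat \<theta> p q) (X q p)"
proof -
  have "sigmaR \<theta> X p q = (\<Sum>i\<in>UNIV. \<Sum>j\<in>UNIV.
      if j = p then if i = q then asc (Rmat \<theta> p q) (X q p) else 0 else 0)"
    unfolding sigmaR_def
    by (intro sum.cong refl) (auto simp: lact2_def asc2_def tens_apply dz_def amul_asc_right)
  then show ?thesis by simp
qed

lemma ract2_apply: "ract2 \<theta> X b p q = amul \<theta> (X p q) (twist \<theta> p (twist \<theta> q b))"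
proof -
  have "ract2 \<theta> X b p q = (\<Sum>i\<in>UNIV. \<Sum>j\<in>UNIV.
      if j = q then if i = p then amul \<theta> (X p q) (twist \<theta> p (twist \<theta> q b)) else 0 else 0)"
    unfolding ract2_def
    by (intro sum.cong refl) (auto simp: tens_apply lact1_dz ract1_dz)
  then show ?thesis by simp
qed

lemma sigmaR_sigmaR: "sigmaR \<theta> (sigmaR \<theta> X) = X"
  by (simp add: fun_eq_iff sigmaR_apply asc_asc Rmat_mult_Rmat_swap)

theorem lemma4p3:
  fixes \<theta> :: real
  shows "bimodule_connection \<theta> (nablaR \<theta>) (sigmaR \<theta>)"
  unfolding bimodule_connection_def
proof (intro conjI allI)
  show "bij (sigmaR \<theta>)"
    by (rule o_bij[of "sigmaR \<theta>"]) (simp_all add: fun_eq_iff sigmaR_sigmaR)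
  show "nablaR \<theta> (v + w) = nablaR \<theta> v + nablaR \<theta> w" for v w
    by (simp add: fun_eq_iff nablaR_apply tderiv_add)
  show "nablaR \<theta> (asc1 c v) = asc2 c (nablaR \<theta> v)" for c v
    by (simp add: fun_eq_iff nablaR_apply asc1_def asc2_def tderiv_asc)
  show "sigmaR \<theta> (X + Y) = sigmaR \<theta> X + sigmaR \<theta> Y" for X Y
    by (simp add: fun_eq_iff sigmaR_apply asc_add)
  show "sigmaR \<theta> (lact2 \<theta> a X) = lact2 \<theta> a (sigmaR \<theta> X)" for a X
    by (simp add: fun_eq_iff sigmaR_apply lact2_def amul_asc_right)
  show "sigmaR \<theta> (ract2 \<theta> X a) = ract2 \<theta> (sigmaR \<theta> X) a" for a X
    by (simp add: fun_eq_iff sigmaR_apply ract2_apply amul_asc_left twist_commute)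
  show "nablaR \<theta> (lact1 \<theta> a v) = lact2 \<theta> a (nablaR \<theta> v) + tens \<theta> (dA \<theta> a) v" for a v
    by (simp add: fun_eq_iff nablaR_apply lact1_def lact2_def tens_apply dA_eq_tderiv tderiv_amul
        add.commute)
  show "nablaR \<theta> (ract1 \<theta> v a) = ract2 \<theta> (nablaR \<theta> v) a + sigmaR \<theta> (tens \<theta> v (dA \<theta> a))" for a v
    by (simp add: fun_eq_iff nablaR_apply ract1_def ract2_apply sigmaR_apply tens_apply dA_eq_tderiv
        tderiv_amul tderiv_twist amul_asc_right)
qed

end
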